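(* Let $(V,A,\succ)$ be an election, let $0<B\le|A|$, $s>0$, and let $\mathcal{I}$ be a probability distribution on $[0,1]$ with continuous cumulative distribution function. Then there exists an $s$-SLEO with income distribution $\mathcal{I}$ and total budget $B$.
   Context: An election $(V,A,\succ)$: finite nonempty voter set $V$ with $n=|V|$, finite candidate set $A$, and a strict linear order $\succ_v$ on $A$ for each voter $v$. Extend $\succ_v$ to $A\cup\{\emptyset\}$ by placing the outside option $\emptyset$ strictly below every candidate. Given a price vector $p_v\in[0,1]^{A\cup\{\emptyset\}}$ with $p_{v,\emptyset}=0$ and an income $b\ge0$, voter $v$'s demand is the $\succ_v$-maximal element of $\{a\in A\cup\{\emptyset\}: p_{v,a}\le b\}$; the random demand $\mathcal{D}_v(p_v,\mathcal{I})$ is this demand when $b\sim\mathcal{I}$. Given $s>0$, $B>0$ and $\mathcal{I}$ supported on $[0,1]$, an $s$-SLEO $(x,y,p)$ consists of prices $p_v\in[0,1]^{A\cup\{\emptyset\}}$ with $p_{v,\emptyset}=0$ and consumptions $x_v\in[0,1]^{A\cup\{\emptyset\}}$ for each $v\in V$, and $y\in[0,1]^A$, such that: (1) $x_{v,a}=\Pr[\mathcal{D}_v(p_v,\mathcal{I})=a]$ for all $v\in V$, $a\in A\cup\{\emptyset\}$; (2) for all $v\in V$, $a\in A$: $s\cdot x_{v,a}\le y_a$, and if $s\cdot x_{v,a}<y_a$ then $p_{v,a}=0$; (3) $y$ maximizes $\sum_{a\in A}\big(\sum_{v\in V}p_{v,a}\big)z_a$ over all $z\in[0,1]^A$ with $\sum_{a\in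 A}z_a=B$. *)

theory Defs
  imports "HOL-Probability.Probability"
begin

(* Candidates are elements of A :: 'a set; the outside option \<emptyset> is None,
   a candidate a is Some a.  Voter v's preference is a strict linear order R v on A
   ((a,b) \<in> R v means a \<succ>_v b). *)

definition election :: "'v set \<Rightarrow> 'a set \<Rightarrow> ('v \<Rightarrow> ('a \<times> 'a) set) \<Rightarrow> bool" where
  "election V A R \<longleftrightarrow> finite V \<and> V \<noteq> {} \<and> finite A \<and>
     (\<forall>v\<in>V. R v \<subseteq> A \<times> A \<and> strict_linear_order_on A (R v))"

definition ext_pref :: "('a \<times> 'a) set \<Rightarrow> 'a option \<Rightarrow> 'a option \<Rightarrow> bool" where
  "ext_pref R c d \<longleftrightarrow> (case (c, d) of
      (Some a, None) \<Rightarrow> True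
    | (Some a, Some b) \<Rightarrow> (a, b) \<in> R
    | _ \<Rightarrow> False)"

definition affordable :: "'a set \<Rightarrow> ('a option \<Rightarrow> real) \<Rightarrow> real \<Rightarrow> 'a option set" where
  "affordable A p b = {c \<in> insert None (Some ` A). p c \<le> b}"

definition demand :: "'a set \<Rightarrow> ('a \<times> 'a) set \<Rightarrow> ('a option \<Rightarrow> real) \<Rightarrow> real \<Rightarrow> 'a option" where
  "demand A R p b = (THE c. c \<in> affordable A p b \<and>
       (\<forall>d\<in>affordable A p b. d \<noteq> c \<longrightarrow> ext_pref R c d))"

definition SLEO ::
  "'v set \<Rightarrow> 'a set \<Rightarrow> ('v \<Rightarrow> ('a \<times> 'a) set) \<Rightarrow> real \<Rightarrow> real \<Rightarrow> real measure \<Rightarrow>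
   ('v \<Rightarrow> 'a option \<Rightarrow> real) \<Rightarrow> ('a \<Rightarrow> real) \<Rightarrow> ('v \<Rightarrow> 'a option \<Rightarrow> real) \<Rightarrow> bool" where
  "SLEO V A R s B I x y p \<longleftrightarrow>
     \<comment> \<open>prices and consumptions in [0,1], outside option free\<close>
     (\<forall>v\<in>V. p v None = 0 \<and> (\<forall>c\<in>insert None (Some ` A). p v c \<in> {0..1} \<and> x v c \<in> {0..1}))
   \<and> (\<forall>a\<in>A. y a \<in> {0..1})
     \<comment> \<open>(1) consumption equals the probability of demand\<close>
   \<and> (\<forall>v\<in>V. \<forall>c\<in>insert None (Some ` A).
        x v c = measure I {b. demand A (R v) (p v) b = c})
     \<comment> \<open>(2) supply constraints and complementary slackness\<close>
   \<and> (\<forall>v\<in>V. \<forall>a\<in>A. s * x v (Some a) \<le> y a \<and>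
        (s * x v (Some a) < y a \<longrightarrow> p v (Some a) = 0))
     \<comment> \<open>(3) y maximizes revenue over z \<in> [0,1]^A with \<Sum>z = B\<close>
   \<and> (\<Sum>a\<in>A. y a) = B
   \<and> (\<forall>z. (\<forall>a\<in>A. z a \<in> {0..1}) \<and> (\<Sum>a\<in>A. z a) = B \<longrightarrow>
        (\<Sum>a\<in>A. (\<Sum>v\<in>V. p v (Some a)) * z a) \<le> (\<Sum>a\<in>A. (\<Sum>v\<in>V. p v (Some a)) * y a))"

end

(*
  A price for every voter and candidate, a supply for every candidate and a revenue
  threshold form one point of a compact box. A tatonnement map raises prices where
  scaled demand exceeds supply, shifts supply towards candidates whose total price beats the
  threshold, and adjusts the threshold until total supply is B, clipping every coordinate to
  its range. Since the income distribution has no atoms, demand probabilities are continuous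
  functions of the prices, so Brouwer's theorem, a consequence of the non-contractibility of
  spheres, yields a fixed point. At a fixed point every coordinate satisfies complementary
  slackness; this gives the supply constraints, total supply B, and optimality of the supply
  vector, because allocating by a revenue threshold solves the linear program.
*)
theory Submission
  imports Defs "HOL-Homology.Homology"
begin

lemma continuous_on_coordinate [continuous_intros]: "continuous_on S (\<lambda>x. x i)"
  by (rule continuous_on_subset[OF continuous_on_product_coordinates]) simp

lemma continuous_on_snd_coordinate [continuous_intros]: "continuous_on S (\<lambda>z. snd z i)"
  by (rule continuous_on_product_then_coordinatewise) (intro continuous_intros)

lemma homotopic_with_canonI:
  assumes "continuous_on ({0..1::real} \<times> X) h" "h \<in> {0..1} \<times> X \<rightarrow> Y"
    and "\<And>x. x \<in> X \<Longrightarrow> h (0, x) = p x" "\<And>x. x \<in> X \<Longrightarrow> h (1, x) = q x"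
  shows "homotopic_with_canon (\<lambda>_. True) X Y p q"
  using assms
  by (subst homotopic_with) (auto simp: subtopology_Times[symmetric] continuous_map_subtopology_eu)

section \<open>Brouwer's fixed point theorem\<close>

text \<open>Points of \<open>\<real>\<^sup>m\<^sup>+\<^sup>1\<close> are functions \<^typ>\<open>nat \<Rightarrow> real\<close> vanishing above \<open>m\<close>, as in
  \<^term>\<open>nsphere m\<close>.\<close>

definition dot :: "nat \<Rightarrow> (nat \<Rightarrow> real) \<Rightarrow> (nat \<Rightarrow> real) \<Rightarrow> real" where
  "dot m x y = (\<Sum>i\<le>m. x i * y i)"

definition unit_disc :: "nat \<Rightarrow> (nat \<Rightarrow> real) set" where
  "unit_disc m = {x. dot m x x \<le> 1 \<and> (\<forall>i>m. x i = 0)}"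

definition unit_sphere :: "nat \<Rightarrow> (nat \<Rightarrow> real) set" where
  "unit_sphere m = {x. dot m x x = 1 \<and> (\<forall>i>m. x i = 0)}"

definition direction :: "nat \<Rightarrow> (nat \<Rightarrow> real) \<Rightarrow> nat \<Rightarrow> real" where
  "direction m x = (\<lambda>i. x i / sqrt (dot m x x))"

lemma dot_self_nonneg: "0 \<le> dot m x x"
  unfolding dot_def by (simp add: sum_nonneg)

lemma dot_self_eq_0_iff: "dot m x x = 0 \<longleftrightarrow> (\<forall>i\<le>m. x i = 0)"
  unfolding dot_def by (subst sum_nonneg_eq_0_iff) auto

lemma dot_self_linear_combination:
  "dot m (\<lambda>i. a * x i + b * y i) (\<lambda>i. a * x i + b * y i)
     = a\<^sup>2 * dot m x x + 2 * a * b * dot m x y + b\<^sup>2 * dot m y y"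
proof -
  have "(a * x i + b * y i) * (a * x i + b * y i)
      = a\<^sup>2 * (x i * x i) + 2 * a * b * (x i * y i) + b\<^sup>2 * (y i * y i)" for i
    by (simp add: power2_eq_square algebra_simps)
  then show ?thesis
    unfolding dot_def by (simp add: sum.distrib sum_distrib_left)
qed

lemma dot_self_scale: "dot m (\<lambda>i. c * x i) (\<lambda>i. c * x i) = c\<^sup>2 * dot m x x"
  using dot_self_linear_combination[of m c x 0 x] by simp

lemma dot_le_half_sum: "dot m x y \<le> (dot m x x + dot m y y) / 2"
proof -
  have "dot m x y \<le> (\<Sum>i\<le>m. ((x i)\<^sup>2 + (y i)\<^sup>2) / 2)"
    unfolding dot_def
    by (intro sum_mono) (use sum_squares_bound[of "x i" "y i" for i] in \<open>simp add: field_simps\<close>)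
  also have "\<dots> = (dot m x x + dot m y y) / 2"
    unfolding dot_def by (simp add: sum.distrib power2_eq_square flip: sum_divide_distrib)
  finally show ?thesis .
qed

lemma continuous_on_dot [continuous_intros]:
  assumes "continuous_on S f" "continuous_on S g"
  shows "continuous_on S (\<lambda>u. dot m (f u) (g u))"
  unfolding dot_def
  by (intro continuous_intros assms[THEN continuous_on_product_then_coordinatewise])

lemma unit_sphere_subset_unit_disc: "unit_sphere m \<subseteq> unit_disc m"
  unfolding unit_sphere_def unit_disc_def by auto

lemma direction_in_unit_sphere:
  assumes "dot m x x \<noteq> 0" "\<forall>i>m. x i = 0"
  shows "direction m x \<in> unit_sphere m"
proof -
  have "dot m (direction m x) (direction m x) = dot m x x / (sqrt (dot m x x))\<^sup>2"
    unfolding dot_def direction_def by (simp add: sum_divide_distrib power2_eq_square)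
  then show ?thesis
    using assms dot_self_nonneg[of m x] unfolding unit_sphere_def direction_def by simp
qed

lemma direction_of_unit_sphere: "x \<in> unit_sphere m \<Longrightarrow> direction m x = x"
  unfolding unit_sphere_def direction_def by simp

lemma continuous_on_direction [continuous_intros]:
  assumes "continuous_on S f" "\<forall>u\<in>S. dot m (f u) (f u) \<noteq> 0"
  shows "continuous_on S (\<lambda>u. direction m (f u))"
  unfolding direction_def using assms(2)
  by (intro continuous_intros assms(1)[THEN continuous_on_product_then_coordinatewise]) auto

lemma not_contractible_unit_sphere: "\<not> contractible (unit_sphere m)"
proof -
  have "nsphere m = top_of_set (unit_sphere m)"
    by (simp add: nsphere unit_sphere_def dot_def power2_eq_square euclidean_product_topology)
  then show ?thesis
    by (metis contractible_space_top_of_set non_contractible_space_nsphere)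
qed

lemma homotopic_id_unit_sphere_map:
  assumes cont: "continuous_on (unit_sphere m) u" and into: "u \<in> unit_sphere m \<rightarrow> unit_sphere m"
    and not_inward: "\<forall>x\<in>unit_sphere m. 0 \<le> dot m x (u x)"
  shows "homotopic_with_canon (\<lambda>_. True) (unit_sphere m) (unit_sphere m) id u"
proof -
  let ?S = "unit_sphere m"
  define w where "w z = (\<lambda>i. (1 - fst z) * snd z i + fst z * u (snd z) i)" for z
  have w_nonzero: "dot m (w (t, x)) (w (t, x)) \<noteq> 0" if "t \<in> {0..1}" "x \<in> ?S" for t x
  proof -
    have "u x \<in> ?S"
      using into that(2) by blast
    then have "dot m (w (t, x)) (w (t, x)) = (1 - t)\<^sup>2 + t\<^sup>2 + 2 * t * (1 - t) * dot m x (u x)"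
      using that(2) unfolding w_def by (simp add: dot_self_linear_combination unit_sphere_def)
    moreover have "0 < (1 - t)\<^sup>2 + t\<^sup>2"
      by (cases "t = 0") (auto intro: add_nonneg_pos)
    moreover have "0 \<le> 2 * t * (1 - t) * dot m x (u x)"
      using that not_inward by simp
    ultimately show ?thesis
      by linarith
  qed
  show ?thesis
  proof (rule homotopic_with_canonI[where h = "\<lambda>z. direction m (w z)"])
    have cont_u_snd: "continuous_on ({0..1} \<times> ?S) (\<lambda>z. u (snd z))"
      by (intro continuous_on_compose2[OF cont continuous_on_snd]) auto
    have "continuous_on ({0..1} \<times> ?S) w"
      unfolding w_def
      by (intro continuous_intros continuous_on_product_then_coordinatewise[OF cont_u_snd])
    then show "continuous_on ({0..1} \<times> ?S) (\<lambda>z. direction m (w z))"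
      using w_nonzero by (intro continuous_on_direction) auto
    have "\<forall>i>m. w (t, x) i = 0" if "x \<in> ?S" for t x
      using into that by (auto simp: w_def unit_sphere_def)
    then show "(\<lambda>z. direction m (w z)) \<in> {0..1} \<times> ?S \<rightarrow> ?S"
      using w_nonzero by (auto intro!: direction_in_unit_sphere)
    show "direction m (w (0, x)) = id x" if "x \<in> ?S" for x
      using that by (simp add: w_def direction_of_unit_sphere)
    show "direction m (w (1, x)) = u x" if "x \<in> ?S" for x
      using direction_of_unit_sphere[of "u x" m] into that by (auto simp: w_def)
  qed
qed

lemma homotopic_unit_disc_map_const:
  assumes cont: "continuous_on (unit_disc m) u" and into: "u \<in> unit_disc m \<rightarrow> X"
  shows "homotopic_with_canon (\<lambda>_. True) (unit_sphere m) X u (\<lambda>_. u (\<lambda>_. 0))"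
proof -
  let ?S = "unit_sphere m"
  have shrink: "(\<lambda>i. (1 - t) * x i) \<in> unit_disc m" if "t \<in> {0..1}" "x \<in> ?S" for t x
  proof -
    have "dot m (\<lambda>i. (1 - t) * x i) (\<lambda>i. (1 - t) * x i) = (1 - t)\<^sup>2"
      using that(2) by (simp add: dot_self_scale unit_sphere_def)
    then show ?thesis
      using that by (auto simp: unit_disc_def unit_sphere_def power_le_one)
  qed
  then have shrink_image: "(\<lambda>z i. (1 - fst z) * snd z i) ` ({0..1} \<times> ?S) \<subseteq> unit_disc m"
    by auto
  show ?thesis
  proof (rule homotopic_with_canonI[where h = "\<lambda>z. u (\<lambda>i. (1 - fst z) * snd z i)"])
    show "continuous_on ({0..1} \<times> ?S) (\<lambda>z. u (\<lambda>i. (1 - fst z) * snd z i))"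
      using shrink_image by (intro continuous_on_compose2[OF cont] continuous_intros)
    show "(\<lambda>z. u (\<lambda>i. (1 - fst z) * snd z i)) \<in> {0..1} \<times> ?S \<rightarrow> X"
      using shrink_image into by blast
    show "u (\<lambda>i. (1 - fst (0::real, x)) * snd (0::real, x) i) = u x" for x
      by simp
    show "u (\<lambda>i. (1 - fst (1::real, x)) * snd (1::real, x) i) = u (\<lambda>_. 0)" for x
      by simp
  qed
qed

lemma unit_disc_map_to_unit_sphere_points_inward:
  assumes cont: "continuous_on (unit_disc m) u" and into: "u \<in> unit_disc m \<rightarrow> unit_sphere m"
  shows "\<exists>x\<in>unit_sphere m. dot m x (u x) < 0"
proof (rule ccontr)
  assume "\<not> ?thesis"
  then have "homotopic_with_canon (\<lambda>_. True) (unit_sphere m) (unit_sphere m) id u"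
    using continuous_on_subset[OF cont unit_sphere_subset_unit_disc] into unit_sphere_subset_unit_disc
    by (intro homotopic_id_unit_sphere_map) (auto simp: not_less)
  moreover have "homotopic_with_canon (\<lambda>_. True) (unit_sphere m) (unit_sphere m) u (\<lambda>_. u (\<lambda>_. 0))"
    by (rule homotopic_unit_disc_map_const[OF cont into])
  ultimately have "contractible (unit_sphere m)"
    unfolding contractible_def by (blast intro: homotopic_with_trans)
  then show False
    using not_contractible_unit_sphere by blast
qed

text \<open>Without a fixed point, the direction of \<open>x - f x\<close> would be a map from the disc to the
  sphere that never points inward, because \<open>dot m x (f x) \<le> 1\<close> on the sphere.\<close>

lemma brouwer_unit_disc:
  assumes cont: "continuous_on (unit_disc m) f" and into: "f \<in> unit_disc m \<rightarrow> unit_disc m"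
  shows "\<exists>x\<in>unit_disc m. f x = x"
proof (rule ccontr)
  assume no_fix: "\<not> ?thesis"
  define d where "d x = (\<lambda>i. x i - f x i)" for x
  have d_nonzero: "dot m (d x) (d x) \<noteq> 0" if "x \<in> unit_disc m" for x
  proof
    assume "dot m (d x) (d x) = 0"
    moreover have "f x \<in> unit_disc m"
      using into that by blast
    ultimately have "f x i = x i" for i
      using that unfolding dot_self_eq_0_iff d_def unit_disc_def by (cases "i \<le> m") auto
    then have "f x = x" ..
    then show False using no_fix that by blast
  qed
  have d_outside: "\<forall>i>m. d x i = 0" if "x \<in> unit_disc m" for x
    using that into unfolding d_def unit_disc_def by auto
  have "continuous_on (unit_disc m) (\<lambda>x. direction m (d x))"
    unfolding d_def using d_nonzero
    by (intro continuous_intros cont[THEN continuous_on_product_then_coordinatewise]) (auto simp: d_def)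
  moreover have "(\<lambda>x. direction m (d x)) \<in> unit_disc m \<rightarrow> unit_sphere m"
    using direction_in_unit_sphere d_nonzero d_outside by blast
  ultimately obtain x where x: "x \<in> unit_sphere m" and "dot m x (direction m (d x)) < 0"
    using unit_disc_map_to_unit_sphere_points_inward by blast
  moreover have "dot m x (direction m (d x)) = dot m x (d x) / sqrt (dot m (d x) (d x))"
    unfolding direction_def dot_def by (simp add: sum_divide_distrib)
  ultimately have "dot m x (d x) < 0"
    using dot_self_nonneg[of m "d x"] by (simp add: divide_less_0_iff)
  moreover have "f x \<in> unit_disc m"
    using x into unit_sphere_subset_unit_disc by blast
  then have "dot m x (f x) \<le> 1"
    using dot_le_half_sum[of m x "f x"] x unfolding unit_sphere_def unit_disc_def by simp
  moreover have "dot m x (d x) = dot m x x - dot m x (f x)"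
    unfolding d_def dot_def by (simp add: right_diff_distrib sum_subtractf)
  ultimately show False
    using x unfolding unit_sphere_def by simp
qed

lemma fixpoint_of_retract:
  assumes fixpoint_X: "\<And>g. continuous_on X g \<Longrightarrow> g \<in> X \<rightarrow> X \<Longrightarrow> \<exists>x\<in>X. g x = x"
    and r: "continuous_on X r" "r \<in> X \<rightarrow> K"
    and j: "continuous_on K j" "j \<in> K \<rightarrow> X"
    and retraction: "\<And>z. z \<in> K \<Longrightarrow> r (j z) = z"
    and f: "continuous_on K f" "f \<in> K \<rightarrow> K"
  shows "\<exists>z\<in>K. f z = z"
proof -
  have "continuous_on X (\<lambda>x. j (f (r x)))"
    by (intro continuous_on_compose2[OF j(1)] continuous_on_compose2[OF f(1)] r(1))
      (use r f in auto)
  moreover have "(\<lambda>x. j (f (r x))) \<in> X \<rightarrow> X"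
    using r j f by auto
  ultimately obtain x where x: "x \<in> X" "j (f (r x)) = x"
    using fixpoint_X by blast
  have "f (r x) \<in> K"
    using x r f by auto
  then have "f (r x) = r (j (f (r x)))"
    using retraction by simp
  then show ?thesis
    using x r by auto
qed

definition clip :: "real \<Rightarrow> real \<Rightarrow> real \<Rightarrow> real" where
  "clip lo hi t = max lo (min hi t)"

lemma clip_in_interval: "lo \<le> hi \<Longrightarrow> clip lo hi t \<in> {lo..hi}"
  unfolding clip_def by auto

lemma clip_eq_self: "t \<in> {lo..hi} \<Longrightarrow> clip lo hi t = t"
  unfolding clip_def by auto

lemma continuous_on_clip [continuous_intros]:
  "continuous_on S f \<Longrightarrow> continuous_on S (\<lambda>x. clip lo hi (f x))"
  unfolding clip_def by (intro continuous_intros)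

lemma clip_fixpoint_cases:
  assumes "t \<in> {lo..hi}" "clip lo hi (t + d) = t"
  shows "(t = lo \<and> d \<le> 0) \<or> (t = hi \<and> 0 \<le> d) \<or> d = 0"
  using assms unfolding clip_def by (auto simp: max_def min_def split: if_splits)

lemma continuous_on_coordinatewise_restrict [continuous_intros]:
  assumes "\<And>i. i \<in> I \<Longrightarrow> continuous_on S (\<lambda>x. f x i)"
  shows "continuous_on S (\<lambda>x. restrict (f x) I)"
proof (rule continuous_on_coordinatewise_then_product)
  show "continuous_on S (\<lambda>x. restrict (f x) I i)" for i
    by (cases "i \<in> I") (simp_all add: assms)
qed

lemma in_unit_disc_if_small_coordinates:
  assumes "\<forall>k\<le>m. \<bar>x k\<bar> \<le> 1 / Suc m" "\<forall>k>m. x k = 0"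
  shows "x \<in> unit_disc m"
proof -
  have "(x k)\<^sup>2 \<le> (1 / Suc m)\<^sup>2" if "k \<le> m" for k
    using power_mono[OF assms(1)[rule_format, OF that] abs_ge_zero, of 2] by simp
  then have "dot m x x \<le> (\<Sum>k\<le>m. (1 / Suc m)\<^sup>2)"
    unfolding dot_def power2_eq_square[symmetric] by (intro sum_mono) simp
  also have "\<dots> \<le> 1"
    by (simp add: power2_eq_square)
  finally show ?thesis
    using assms(2) by (simp add: unit_disc_def)
qed

lemma box_retract_of_unit_disc:
  fixes lo hi :: "'i \<Rightarrow> real"
  assumes "finite I" "card I = Suc m" and lo_hi: "\<forall>i\<in>I. lo i \<le> hi i"
  obtains r j where "continuous_on (unit_disc m) r" "r \<in> unit_disc m \<rightarrow> (\<Pi>\<^sub>E i\<in>I. {lo i..hi i})"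
    and "continuous_on (\<Pi>\<^sub>E i\<in>I. {lo i..hi i}) j" "j \<in> (\<Pi>\<^sub>E i\<in>I. {lo i..hi i}) \<rightarrow> unit_disc m"
    and "\<And>z. z \<in> (\<Pi>\<^sub>E i\<in>I. {lo i..hi i}) \<Longrightarrow> r (j z) = z"
proof -
  let ?K = "\<Pi>\<^sub>E i\<in>I. {lo i..hi i}"
  obtain e where e: "bij_betw e {..m} I"
    using ex_bij_betw_nat_finite[OF assms(1)] assms(2) by (metis atLeast0LessThan lessThan_Suc_atMost)
  define W where "W = 1 + (\<Sum>i\<in>I. hi i - lo i)"
  have width: "hi i - lo i \<le> W" if "i \<in> I" for i
    using member_le_sum[of i I "\<lambda>i. hi i - lo i"] that lo_hi assms(1) unfolding W_def by auto
  have W_pos: "0 < W"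
    using sum_nonneg[of I "\<lambda>i. hi i - lo i"] lo_hi unfolding W_def by auto
  define c where "c = W * Suc m"
  have c_pos: "0 < c"
    unfolding c_def using W_pos by simp
  txt \<open>\<open>j\<close> embeds the box affinely into the disc; \<open>r\<close> undoes \<open>j\<close> and clips the rest of the
    disc onto the box.\<close>
  define r where "r x = (\<lambda>i\<in>I. clip (lo i) (hi i) (lo i + c * x (inv_into {..m} e i)))" for x
  define j where "j z = (\<lambda>k. if k \<le> m then (z (e k) - lo (e k)) / c else 0)" for z
  show thesis
  proof (rule that)
    show "continuous_on (unit_disc m) r"
      unfolding r_def by (intro continuous_intros)
    show "r \<in> unit_disc m \<rightarrow> ?K"
      unfolding r_def using lo_hi clip_in_interval by auto
    show "continuous_on ?K j"
    proof (rule continuous_on_coordinatewise_then_product)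
      show "continuous_on ?K (\<lambda>z. j z k)" for k
        unfolding j_def using c_pos by (cases "k \<le> m") (simp_all add: continuous_intros)
    qed
    show "j \<in> ?K \<rightarrow> unit_disc m"
    proof
      fix z assume z: "z \<in> ?K"
      have "\<bar>j z k\<bar> \<le> 1 / Suc m" if "k \<le> m" for k
      proof -
        have "e k \<in> I"
          using e that by (auto simp: bij_betw_def)
        then have "z (e k) \<in> {lo (e k)..hi (e k)}" "hi (e k) - lo (e k) \<le> W"
          using PiE_mem[OF z] width by auto
        then have "0 \<le> z (e k) - lo (e k)" "(z (e k) - lo (e k)) * Suc m \<le> W * Suc m"
          by auto
        then show ?thesis
          using that c_pos W_pos by (simp add: j_def c_def field_simps)
      qed
      then show "j z \<in> unit_disc m"
        by (intro in_unit_disc_if_small_coordinates) (auto simp: j_def)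
    qed
    show "r (j z) = z" if "z \<in> ?K" for z
    proof
      fix i
      show "r (j z) i = z i"
      proof (cases "i \<in> I")
        case True
        then have "inv_into {..m} e i \<le> m" "e (inv_into {..m} e i) = i"
          using e by (auto simp: bij_betw_def inv_into_into f_inv_into_f)
        then show ?thesis
          using True c_pos PiE_mem[OF that True] by (simp add: r_def j_def clip_eq_self)
      next
        case False
        then show ?thesis
          using PiE_arb[OF that False] by (simp add: r_def)
      qed
    qed
  qed
qed

lemma brouwer_box:
  fixes f :: "('i \<Rightarrow> real) \<Rightarrow> 'i \<Rightarrow> real"
  assumes "finite I" and lo_hi: "\<forall>i\<in>I. lo i \<le> hi i"
    and cont: "continuous_on (\<Pi>\<^sub>E i\<in>I. {lo i..hi i}) f"
    and into: "f \<in> (\<Pi>\<^sub>E i\<in>I. {lo i..hi i}) \<rightarrow> (\<Pi>\<^sub>E i\<in>I. {lo i..hi i})"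
  shows "\<exists>z\<in>(\<Pi>\<^sub>E i\<in>I. {lo i..hi i}). f z = z"
proof (cases "I = {}")
  case True
  then show ?thesis
    using into by auto
next
  case False
  let ?K = "\<Pi>\<^sub>E i\<in>I. {lo i..hi i}"
  obtain m where "card I = Suc m"
    using False \<open>finite I\<close> by (metis card_0_eq not0_implies_Suc)
  then obtain r j where retract: "continuous_on (unit_disc m) r" "r \<in> unit_disc m \<rightarrow> ?K"
    "continuous_on ?K j" "j \<in> ?K \<rightarrow> unit_disc m" "\<And>z. z \<in> ?K \<Longrightarrow> r (j z) = z"
    using box_retract_of_unit_disc[OF \<open>finite I\<close> _ lo_hi] by blast
  show ?thesis
    by (rule fixpoint_of_retract[where X = "unit_disc m"])
      (fact brouwer_unit_disc retract cont into)+
qed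

section \<open>Demand of a single voter\<close>

lemma strict_linear_order_on_finite_has_top:
  assumes slo: "strict_linear_order_on A R" and C: "finite C" "C \<noteq> {}" "C \<subseteq> A"
  obtains a where "a \<in> C" "\<forall>c\<in>C. c \<noteq> a \<longrightarrow> (a, c) \<in> R"
proof -
  have irr: "irrefl R" and tr: "trans R" and tot: "total_on A R"
    using slo by (auto simp: strict_linear_order_on_def)
  have "wf (R \<inter> C \<times> C)"
  proof (rule finite_acyclic_wf)
    show "finite (R \<inter> C \<times> C)"
      using C(1) by (intro finite_Int disjI2 finite_cartesian_product)
    have "trans (R \<inter> C \<times> C)"
      using tr unfolding trans_def by blast
    then show "acyclic (R \<inter> C \<times> C)"
      using irr by (simp add: acyclic_irrefl trancl_id irrefl_def)
  qed
  then obtain a where "a \<in> C" and top: "\<And>c. (c, a) \<in> R \<inter> C \<times> C \<Longrightarrow> c \<notin> C"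
    using wfE_min' C(2) by blast
  moreover have "(a, c) \<in> R" if "c \<in> C" "c \<noteq> a" for c
    using tot top[of c] that \<open>a \<in> C\<close> C(3) by (auto simp: total_on_def)
  ultimately show thesis
    using that by blast
qed

lemma ext_pref_asym:
  assumes "strict_linear_order_on A R" "ext_pref R c d"
  shows "\<not> ext_pref R d c"
proof -
  have "(y, x) \<notin> R" if "(x, y) \<in> R" for x y
    using assms(1) that unfolding strict_linear_order_on_def irrefl_def by (meson transD)
  then show ?thesis
    using assms(2) unfolding ext_pref_def by (auto split: option.splits)
qed

lemma demand_eqI:
  assumes "strict_linear_order_on A R" "c \<in> affordable A q b"
    and "\<forall>d\<in>affordable A q b. d \<noteq> c \<longrightarrow> ext_pref R c d"
  shows "demand A R q b = c"
  unfolding demand_def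
proof (rule the_equality)
  show "c \<in> affordable A q b \<and> (\<forall>d\<in>affordable A q b. d \<noteq> c \<longrightarrow> ext_pref R c d)"
    using assms(2,3) by blast
  fix d assume d: "d \<in> affordable A q b \<and> (\<forall>e\<in>affordable A q b. e \<noteq> d \<longrightarrow> ext_pref R d e)"
  show "d = c"
  proof (rule ccontr)
    assume "d \<noteq> c"
    then have "ext_pref R c d" "ext_pref R d c"
      using assms(2,3) d by auto
    then show False
      using ext_pref_asym[OF assms(1)] by blast
  qed
qed

lemma demand_is_best_affordable:
  assumes "finite A" "strict_linear_order_on A R" "q None = 0" "0 \<le> b"
  shows "demand A R q b \<in> affordable A q b \<and>
    (\<forall>d\<in>affordable A q b. d \<noteq> demand A R q b \<longrightarrow> ext_pref R (demand A R q b) d)"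
proof -
  let ?C = "{a\<in>A. q (Some a) \<le> b}"
  obtain c where c: "c \<in> affordable A q b" "\<forall>d\<in>affordable A q b. d \<noteq> c \<longrightarrow> ext_pref R c d"
  proof (cases "?C = {}")
    case True
    then have "affordable A q b = {None}"
      using assms(3,4) by (auto simp: affordable_def)
    then show thesis
      using that by simp
  next
    case False
    then obtain a where a: "a \<in> ?C" and top: "\<forall>c\<in>?C. c \<noteq> a \<longrightarrow> (a, c) \<in> R"
      using strict_linear_order_on_finite_has_top[OF assms(2), of ?C] assms(1) by auto
    have "ext_pref R (Some a) d" if "d \<in> affordable A q b" "d \<noteq> Some a" for d
      using that top by (cases d) (auto simp: affordable_def ext_pref_def)
    then show thesis
      using that[of "Some a"] a by (auto simp: affordable_def)
  qed
  then show ?thesis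
    using demand_eqI[OF assms(2) c] by simp
qed

lemma demand_eq_SomeD:
  assumes "finite A" "strict_linear_order_on A R" "q None = 0" "0 \<le> b"
    and "demand A R q b = Some a"
  shows "a \<in> A" "q (Some a) \<le> b" "\<forall>c\<in>A. (c, a) \<in> R \<longrightarrow> b < q (Some c)"
proof -
  have irr: "irrefl R" and tr: "trans R"
    using assms(2) by (auto simp: strict_linear_order_on_def)
  have a: "Some a \<in> affordable A q b"
    and best: "\<And>d. d \<in> affordable A q b \<Longrightarrow> d \<noteq> Some a \<Longrightarrow> ext_pref R (Some a) d"
    using demand_is_best_affordable[of A R q b] assms by auto
  then show "a \<in> A" "q (Some a) \<le> b"
    by (auto simp: affordable_def)
  show "\<forall>c\<in>A. (c, a) \<in> R \<longrightarrow> b < q (Some c)"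
  proof (intro ballI impI)
    fix c assume c: "c \<in> A" "(c, a) \<in> R"
    show "b < q (Some c)"
    proof (rule ccontr)
      assume "\<not> b < q (Some c)"
      then have "Some c \<in> affordable A q b"
        using c(1) by (simp add: affordable_def)
      moreover have "c \<noteq> a"
        using c(2) irr by (auto simp: irrefl_def)
      ultimately have "(a, c) \<in> R"
        using best[of "Some c"] by (simp add: ext_pref_def)
      then have "(c, c) \<in> R"
        using c(2) tr by (meson transD)
      then show False
        using irr by (simp add: irrefl_def)
    qed
  qed
qed

lemma demand_eq_SomeI:
  assumes "strict_linear_order_on A R"
    and a: "a \<in> A" "q (Some a) \<le> b" "\<forall>c\<in>A. (c, a) \<in> R \<longrightarrow> b < q (Some c)"
  shows "demand A R q b = Some a"
proof (rule demand_eqI[OF assms(1)])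
  have above: "(a, c) \<in> R" if "c \<in> A" "q (Some c) \<le> b" "c \<noteq> a" for c
  proof -
    have "(c, a) \<notin> R"
    proof
      assume "(c, a) \<in> R"
      then have "b < q (Some c)"
        using a(3) that(1) by blast
      then show False
        using that(2) by simp
    qed
    moreover have "(a, c) \<in> R \<or> (c, a) \<in> R"
      using assms(1) that a(1) unfolding strict_linear_order_on_def total_on_def by blast
    ultimately show ?thesis
      by blast
  qed
  show "Some a \<in> affordable A q b"
    using a by (simp add: affordable_def)
  show "\<forall>d\<in>affordable A q b. d \<noteq> Some a \<longrightarrow> ext_pref R (Some a) d"
  proof (intro ballI impI)
    fix d assume d: "d \<in> affordable A q b" "d \<noteq> Some a"
    show "ext_pref R (Some a) d"
    proof (cases d)
      case (Some c)
      then show ?thesis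
        using d above[of c] by (auto simp: affordable_def ext_pref_def)
    qed (simp add: ext_pref_def)
  qed
qed

lemma demand_eq_Some_iff:
  assumes "finite A" "strict_linear_order_on A R" "q None = 0" "0 \<le> b"
  shows "demand A R q b = Some a \<longleftrightarrow>
    a \<in> A \<and> q (Some a) \<le> b \<and> (\<forall>c\<in>A. (c, a) \<in> R \<longrightarrow> b < q (Some c))"
  using demand_eq_SomeD[of A R q b a] demand_eq_SomeI[of A R a q b] assms by blast

text \<open>For negative income nothing is affordable and the demand is the junk value
  \<^term>\<open>THE c. False\<close>; what matters is only that it does not depend on the income.\<close>

lemma demand_negative_income:
  assumes "\<forall>c\<in>A. 0 \<le> q (Some c)" "q None = 0" "b < 0"
  shows "demand A R q b = (THE c. False)"
proof -
  have "affordable A q b = {}"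
    unfolding affordable_def using assms by fastforce
  then show ?thesis
    by (simp add: demand_def)
qed

lemma measure_lessThan_eq_cdf:
  assumes "real_distribution M" "isCont (cdf M) t"
  shows "measure M {..<t} = cdf M t"
proof -
  interpret real_distribution M by (rule assms(1))
  have "measure M {..<t} = measure M {..t} - measure M {t}"
    by (subst finite_measure_Diff[symmetric]) (auto intro: arg_cong[where f = "measure M"])
  then show ?thesis
    using assms(2) isCont_cdf by (simp add: cdf_def)
qed

lemma measure_atLeastLessThan_eq_cdf:
  assumes "real_distribution M" "\<forall>t. isCont (cdf M) t" "a \<le> b"
  shows "measure M {a..<b} = cdf M b - cdf M a"
proof -
  interpret real_distribution M by (rule assms(1))
  have "{a..<b} = {..<b} - {..<a}"
    by auto
  moreover have "measure M {..<t} = cdf M t" for t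
    using measure_lessThan_eq_cdf assms(1,2) by blast
  ultimately show ?thesis
    using finite_measure_Diff[of "{..<b}" "{..<a}"] assms(3) by simp
qed

text \<open>Here \<open>2\<close> stands for \<open>\<infinity>\<close>, as incomes are at most \<open>1\<close>.\<close>

definition upgrade_price :: "'a set \<Rightarrow> ('a \<times> 'a) set \<Rightarrow> ('a option \<Rightarrow> real) \<Rightarrow> 'a \<Rightarrow> real" where
  "upgrade_price A R q a = Min (insert 2 ((\<lambda>c. q (Some c)) ` {c\<in>A. (c, a) \<in> R}))"

lemma demand_eq_Some_iff_upgrade_price:
  assumes "finite A" "strict_linear_order_on A R" "q None = 0" "b \<in> {0..1}"
  shows "demand A R q b = Some a \<longleftrightarrow> a \<in> A \<and> b \<in> {q (Some a)..<upgrade_price A R q a}"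
  using demand_eq_Some_iff[where q = q, OF assms(1-3)] assms(1,4)
  by (auto simp: upgrade_price_def Min_gr_iff)

lemma sets_demand_eq_Some:
  assumes "finite A" "strict_linear_order_on A R" "q None = 0" "\<forall>c\<in>A. 0 \<le> q (Some c)" "a \<in> A"
  shows "{b. demand A R q b = Some a} \<in> sets borel"
proof -
  let ?better = "{c\<in>A. (c, a) \<in> R}"
  have "{b. demand A R q b = Some a}
      = {b\<in>{0..}. q (Some a) \<le> b \<and> (\<forall>c\<in>?better. b < q (Some c))}
        \<union> (if (THE c. False) = Some a then {..<0} else {})"
  proof (rule Set.set_eqI)
    fix b :: real
    show "b \<in> {b. demand A R q b = Some a} \<longleftrightarrow>
      b \<in> {b\<in>{0..}. q (Some a) \<le> b \<and> (\<forall>c\<in>?better. b < q (Some c))}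
        \<union> (if (THE c. False) = Some a then {..<0} else {})"
      using demand_eq_Some_iff[where q = q, OF assms(1-3), of b a]
        demand_negative_income[where q = q, OF assms(4,3), of b R] assms(5)
      by (cases "0 \<le> b") auto
  qed
  moreover have "finite ?better"
    using assms(1) by simp
  then have "{b\<in>{0..}. q (Some a) \<le> b \<and> (\<forall>c\<in>?better. b < q (Some c))} \<in> sets borel"
    by measurable
  ultimately show ?thesis
    by simp
qed

lemma measure_demand_eq_Some:
  assumes M: "real_distribution M" "measure M {0..1} = 1" "\<forall>t. isCont (cdf M) t"
    and A: "finite A" "strict_linear_order_on A R"
    and q: "q None = 0" "\<forall>c\<in>A. q (Some c) \<in> {0..1}" and "a \<in> A"
  shows "measure M {b. demand A R q b = Some a}
    = max 0 (cdf M (upgrade_price A R q a) - cdf M (q (Some a)))"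
proof -
  interpret real_distribution M
    by (rule M(1))
  have "AE b in M. b \<in> {0..1}"
    using M(2) by (intro AE_prob_1) simp
  then have "AE b in M. b \<in> {b. demand A R q b = Some a} \<longleftrightarrow> b \<in> {q (Some a)..<upgrade_price A R q a}"
    by (rule AE_mp)
      (auto intro!: AE_I2 simp: demand_eq_Some_iff_upgrade_price[where q = q, OF A q(1)] \<open>a \<in> A\<close>)
  moreover have "{b. demand A R q b = Some a} \<in> sets M"
    using sets_demand_eq_Some[where q = q, OF A q(1) _ \<open>a \<in> A\<close>] q(2) by simp
  ultimately have "measure M {b. demand A R q b = Some a} = measure M {q (Some a)..<upgrade_price A R q a}"
    by (intro measure_eq_AE) auto
  also have "\<dots> = max 0 (cdf M (upgrade_price A R q a) - cdf M (q (Some a)))"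
  proof (cases "q (Some a) \<le> upgrade_price A R q a")
    case True
    then show ?thesis
      using measure_atLeastLessThan_eq_cdf[OF M(1,3) True] cdf_nondecreasing[OF True] by simp
  next
    case False
    then show ?thesis
      using cdf_nondecreasing[of "upgrade_price A R q a" "q (Some a)"] by simp
  qed
  finally show ?thesis .
qed

section \<open>Equilibria as fixed points\<close>

lemma continuous_on_Min_insert [continuous_intros]:
  assumes "finite J" "\<And>j. j \<in> J \<Longrightarrow> continuous_on S (f j)"
  shows "continuous_on S (\<lambda>x. Min (insert (c::real) ((\<lambda>j. f j x) ` J)))"
  using assms
proof (induction J rule: finite_induct)
  case (insert j J)
  have Min_eq: "Min (insert c ((\<lambda>j. f j x) ` insert j J))
      = min (f j x) (Min (insert c ((\<lambda>j. f j x) ` J)))" for x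
  proof -
    have "insert c ((\<lambda>j. f j x) ` insert j J) = insert (f j x) (insert c ((\<lambda>j. f j x) ` J))"
      by auto
    then show ?thesis
      using insert.hyps(1) by (simp del: Min_insert add: Min.insert)
  qed
  show ?case
    unfolding Min_eq by (intro continuous_on_min insert.prems insert.IH) auto
qed (simp add: continuous_on_const)

lemma threshold_allocation_maximizes:
  fixes r y z :: "'a \<Rightarrow> real"
  assumes threshold: "\<forall>a\<in>A. (y a = 0 \<and> r a \<le> L) \<or> (y a = 1 \<and> L \<le> r a) \<or> r a = L"
    and z: "\<forall>a\<in>A. z a \<in> {0..1}" and same_total: "(\<Sum>a\<in>A. z a) = (\<Sum>a\<in>A. y a)"
  shows "(\<Sum>a\<in>A. r a * z a) \<le> (\<Sum>a\<in>A. r a * y a)"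
proof -
  have "(r a - L) * (z a - y a) \<le> 0" if "a \<in> A" for a
  proof -
    have "0 \<le> z a" "z a \<le> 1"
      using z that by auto
    then show ?thesis
      using threshold that by (auto simp: mult_le_0_iff)
  qed
  then have "(\<Sum>a\<in>A. (r a - L) * (z a - y a)) \<le> 0"
    by (rule sum_nonpos)
  moreover have "(\<Sum>a\<in>A. (r a - L) * (z a - y a))
      = (\<Sum>a\<in>A. r a * z a - r a * y a - L * z a + L * y a)"
    by (intro sum.cong refl) (simp add: algebra_simps)
  moreover have "\<dots> = (\<Sum>a\<in>A. r a * z a) - (\<Sum>a\<in>A. r a * y a) - L * (\<Sum>a\<in>A. z a) + L * (\<Sum>a\<in>A. y a)"
    by (simp add: sum.distrib sum_subtractf sum_distrib_left)
  ultimately show ?thesis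
    using same_total by simp
qed

lemma eq_1_if_sum_ge_card:
  fixes f :: "'a \<Rightarrow> real"
  assumes "finite V" "\<forall>v\<in>V. f v \<le> 1" "real (card V) \<le> (\<Sum>v\<in>V. f v)" "v \<in> V"
  shows "f v = 1"
proof -
  have "(\<Sum>v\<in>V. 1 - f v) \<le> 0"
    using assms(3) by (simp add: sum_subtractf)
  then have "\<forall>v\<in>V. 1 - f v = 0"
    using assms(1,2) sum_nonneg_eq_0_iff[of V "\<lambda>v. 1 - f v"] sum_nonneg[of V "\<lambda>v. 1 - f v"] by auto
  then show ?thesis
    using assms(4) by simp
qed

datatype ('v, 'a) coordinate = Price 'v 'a | Supply 'a | Threshold

locale sleo_market =
  fixes V :: "'v set" and A :: "'a set" and R :: "'v \<Rightarrow> ('a \<times> 'a) set"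
    and s B :: real and I :: "real measure"
  assumes election: "election V A R"
    and B_pos: "0 < B" and B_le_card: "B \<le> real (card A)"
    and distribution: "real_distribution I"
    and supported_01: "measure I {0..1} = 1"
    and continuous_cdf: "\<forall>t. isCont (cdf I) t"
begin

lemma finite_V: "finite V" and V_nonempty: "V \<noteq> {}" and finite_A: "finite A"
  and strict_linear_order: "v \<in> V \<Longrightarrow> strict_linear_order_on A (R v)"
  using election by (auto simp: election_def)

lemma continuous_on_cdf [continuous_intros]:
  assumes "continuous_on S f"
  shows "continuous_on S (\<lambda>x. cdf I (f x))"
proof -
  have "continuous_on UNIV (cdf I)"
    using continuous_cdf by (simp add: continuous_at_imp_continuous_on)
  then show ?thesis
    using assms by (rule continuous_on_compose2) simp
qed

lemma cdf_1: "cdf I 1 = 1"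
proof -
  interpret real_distribution I by (rule distribution)
  have "measure I {0..1} \<le> measure I {..1}"
    by (rule finite_measure_mono) auto
  then show ?thesis
    using supported_01 prob_le_1[of "{..1}"] by (simp add: cdf_def)
qed

definition coordinates :: "('v, 'a) coordinate set" where
  "coordinates = (\<lambda>(v, a). Price v a) ` (V \<times> A) \<union> Supply ` A \<union> {Threshold}"

text \<open>The threshold ranges over \<open>[-1, card V]\<close>, reaching below the revenues \<open>[0, card V]\<close>,
  so that at the bottom of its range every candidate is fully supplied.\<close>

definition lower :: "('v, 'a) coordinate \<Rightarrow> real" where
  "lower i = (if i = Threshold then -1 else 0)"

definition upper :: "('v, 'a) coordinate \<Rightarrow> real" where
  "upper i = (if i = Threshold then real (card V) else 1)"

definition states :: "(('v, 'a) coordinate \<Rightarrow> real) set" where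
  "states = (\<Pi>\<^sub>E i\<in>coordinates. {lower i..upper i})"

definition prices :: "(('v, 'a) coordinate \<Rightarrow> real) \<Rightarrow> 'v \<Rightarrow> 'a option \<Rightarrow> real" where
  "prices z v c = (case c of None \<Rightarrow> 0 | Some a \<Rightarrow> z (Price v a))"

definition demand_prob :: "(('v, 'a) coordinate \<Rightarrow> real) \<Rightarrow> 'v \<Rightarrow> 'a \<Rightarrow> real" where
  "demand_prob z v a = max 0 (cdf I (upgrade_price A (R v) (prices z v) a) - cdf I (z (Price v a)))"

definition revenue :: "(('v, 'a) coordinate \<Rightarrow> real) \<Rightarrow> 'a \<Rightarrow> real" where
  "revenue z a = (\<Sum>v\<in>V. z (Price v a))"

definition excess :: "(('v, 'a) coordinate \<Rightarrow> real) \<Rightarrow> ('v, 'a) coordinate \<Rightarrow> real" where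
  "excess z i = (case i of
      Price v a \<Rightarrow> s * demand_prob z v a - z (Supply a)
    | Supply a \<Rightarrow> revenue z a - z Threshold
    | Threshold \<Rightarrow> (\<Sum>a\<in>A. z (Supply a)) - B)"

definition update :: "(('v, 'a) coordinate \<Rightarrow> real) \<Rightarrow> ('v, 'a) coordinate \<Rightarrow> real" where
  "update z = (\<lambda>i\<in>coordinates. clip (lower i) (upper i) (z i + excess z i))"

lemma in_coordinates_iff [simp]:
  "Price v a \<in> coordinates \<longleftrightarrow> v \<in> V \<and> a \<in> A"
  "Supply a \<in> coordinates \<longleftrightarrow> a \<in> A"
  "Threshold \<in> coordinates"
  by (auto simp: coordinates_def image_iff)

lemma lower_le_upper: "lower i \<le> upper i"
  by (simp add: lower_def upper_def)

lemma continuous_on_excess: "continuous_on S (\<lambda>z. excess z i)"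
proof (cases i)
  case (Price v a)
  have "continuous_on S (\<lambda>z. upgrade_price A (R v) (prices z v) a)"
    unfolding upgrade_price_def prices_def
    by (intro continuous_on_Min_insert) (simp_all add: finite_A continuous_on_coordinate)
  then show ?thesis
    unfolding Price excess_def demand_prob_def coordinate.case by (intro continuous_intros)
next
  case (Supply a)
  then show ?thesis
    unfolding Supply excess_def revenue_def coordinate.case by (intro continuous_intros)
next
  case Threshold
  then show ?thesis
    unfolding Threshold excess_def coordinate.case by (intro continuous_intros)
qed

lemma continuous_on_update: "continuous_on S update"
  unfolding update_def by (intro continuous_intros continuous_on_excess)

lemma update_in_states: "update z \<in> states"
  unfolding update_def states_def using clip_in_interval[OF lower_le_upper] by auto

lemma update_has_fixpoint: "\<exists>z\<in>states. update z = z"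
  unfolding states_def
proof (rule brouwer_box)
  show "finite coordinates"
    by (simp add: coordinates_def finite_V finite_A)
  show "\<forall>i\<in>coordinates. lower i \<le> upper i"
    using lower_le_upper by blast
  show "update \<in> (\<Pi>\<^sub>E i\<in>coordinates. {lower i..upper i}) \<rightarrow> (\<Pi>\<^sub>E i\<in>coordinates. {lower i..upper i})"
    using update_in_states unfolding states_def by blast
qed (rule continuous_on_update)

end

locale sleo_fixpoint = sleo_market +
  fixes z
  assumes z_in_states: "z \<in> states" and z_fixed: "update z = z"
begin

lemma complementary_slackness:
  assumes "i \<in> coordinates"
  shows "(z i = lower i \<and> excess z i \<le> 0) \<or> (z i = upper i \<and> 0 \<le> excess z i) \<or> excess z i = 0"
proof (rule clip_fixpoint_cases)
  show "z i \<in> {lower i..upper i}"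
    using PiE_mem[OF z_in_states[unfolded states_def] assms] .
  show "clip (lower i) (upper i) (z i + excess z i) = z i"
    using fun_cong[OF z_fixed, of i] assms by (simp add: update_def)
qed

lemma price_in_01: "v \<in> V \<Longrightarrow> a \<in> A \<Longrightarrow> z (Price v a) \<in> {0..1}"
  using PiE_mem[OF z_in_states[unfolded states_def], of "Price v a"]
  by (auto simp: coordinates_def lower_def upper_def)

lemma supply_in_01: "a \<in> A \<Longrightarrow> z (Supply a) \<in> {0..1}"
  using PiE_mem[OF z_in_states[unfolded states_def], of "Supply a"]
  by (auto simp: coordinates_def lower_def upper_def)

lemma demand_prob_price_1:
  assumes "z (Price v a) = 1"
  shows "demand_prob z v a = 0"
proof -
  have "cdf I (upgrade_price A (R v) (prices z v) a) \<le> 1"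
    by (rule real_distribution.cdf_bounded_prob[OF distribution])
  then show ?thesis
    using assms cdf_1 by (simp add: demand_prob_def max_absorb1)
qed

lemma price_slackness:
  assumes "v \<in> V" "a \<in> A"
  shows "s * demand_prob z v a \<le> z (Supply a)
    \<and> (s * demand_prob z v a < z (Supply a) \<longrightarrow> z (Price v a) = 0)"
  using complementary_slackness[of "Price v a"] assms supply_in_01[OF assms(2)]
    demand_prob_price_1[of v a]
  by (auto simp: excess_def lower_def upper_def)

lemma supply_slackness:
  assumes "a \<in> A"
  shows "(z (Supply a) = 0 \<and> revenue z a \<le> z Threshold)
    \<or> (z (Supply a) = 1 \<and> z Threshold \<le> revenue z a) \<or> revenue z a = z Threshold"
  using complementary_slackness[of "Supply a"] assms
  by (auto simp: excess_def lower_def upper_def)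

lemma revenue_in_range: "a \<in> A \<Longrightarrow> revenue z a \<in> {0..real (card V)}"
  using price_in_01 sum_mono[of V "\<lambda>v. z (Price v a)" "\<lambda>_. 1"] sum_nonneg[of V "\<lambda>v. z (Price v a)"]
  by (auto simp: revenue_def)

lemma supply_1_at_bottom_threshold:
  assumes "z Threshold = -1" "a \<in> A"
  shows "z (Supply a) = 1"
  using supply_slackness[OF assms(2)] revenue_in_range[OF assms(2)] assms(1) by auto

lemma supply_0_at_top_threshold:
  assumes top: "z Threshold = real (card V)" and a: "a \<in> A"
  shows "z (Supply a) = 0"
proof (rule ccontr)
  assume "z (Supply a) \<noteq> 0"
  then have supplied: "0 < z (Supply a)"
    using supply_in_01[OF a] by simp
  then have "real (card V) \<le> (\<Sum>v\<in>V. z (Price v a))"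
    using supply_slackness[OF a] top by (auto simp: revenue_def)
  then have "z (Price v a) = 1" if "v \<in> V" for v
    using eq_1_if_sum_ge_card[where f = "\<lambda>v. z (Price v a)", OF finite_V _ _ that]
      price_in_01[OF _ a] by auto
  moreover obtain v where "v \<in> V"
    using V_nonempty by blast
  ultimately show False
    using price_slackness[of v a] demand_prob_price_1[of v a] supplied a by simp
qed

lemma supply_total: "(\<Sum>a\<in>A. z (Supply a)) = B"
proof -
  have "(z Threshold = -1 \<and> (\<Sum>a\<in>A. z (Supply a)) \<le> B)
      \<or> (z Threshold = real (card V) \<and> B \<le> (\<Sum>a\<in>A. z (Supply a)))
      \<or> (\<Sum>a\<in>A. z (Supply a)) = B"
    using complementary_slackness[of Threshold]
    by (auto simp: excess_def lower_def upper_def)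
  then consider
      (bottom) "z Threshold = -1" "(\<Sum>a\<in>A. z (Supply a)) \<le> B"
    | (top) "z Threshold = real (card V)" "B \<le> (\<Sum>a\<in>A. z (Supply a))"
    | (balanced) "(\<Sum>a\<in>A. z (Supply a)) = B"
    by blast
  then show ?thesis
  proof cases
    case bottom
    then show ?thesis
      using supply_1_at_bottom_threshold B_le_card by simp
  next
    case top
    then show ?thesis
      using supply_0_at_top_threshold B_pos by simp
  qed
qed

lemma SLEO_at_fixpoint:
  "SLEO V A R s B I (\<lambda>v c. measure I {b. demand A (R v) (prices z v) b = c})
     (\<lambda>a. z (Supply a)) (prices z)"
proof -
  interpret real_distribution I
    by (rule distribution)
  have demand_prob_eq: "measure I {b. demand A (R v) (prices z v) b = Some a} = demand_prob z v a"
    if "v \<in> V" "a \<in> A" for v a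
    unfolding demand_prob_def
    using measure_demand_eq_Some[OF distribution supported_01 continuous_cdf finite_A
        strict_linear_order[OF that(1)], of "prices z v" a] price_in_01[OF that(1)] that(2)
    by (simp add: prices_def)
  have revenue_eq: "(\<Sum>v\<in>V. prices z v (Some a)) = revenue z a" for a
    by (simp add: prices_def revenue_def)
  show ?thesis
    unfolding SLEO_def
  proof (intro conjI ballI allI impI)
    show "prices z v c \<in> {0..1}" if "v \<in> V" "c \<in> insert None (Some ` A)" for v c
      using that price_in_01 by (auto simp: prices_def)
    show "measure I {b. demand A (R v) (prices z v) b = c} \<in> {0..1}" for v c
      by simp
    show "s * measure I {b. demand A (R v) (prices z v) b = Some a} \<le> z (Supply a)"
      if "v \<in> V" "a \<in> A" for v a
      using price_slackness[OF that] demand_prob_eq[OF that] by simp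
    show "prices z v (Some a) = 0"
      if "v \<in> V" "a \<in> A" "s * measure I {b. demand A (R v) (prices z v) b = Some a} < z (Supply a)"
      for v a
      using that price_slackness[OF that(1,2)] demand_prob_eq[OF that(1,2)] by (simp add: prices_def)
    show "(\<Sum>a\<in>A. (\<Sum>v\<in>V. prices z v (Some a)) * y a) \<le> (\<Sum>a\<in>A. (\<Sum>v\<in>V. prices z v (Some a)) * z (Supply a))"
      if "(\<forall>a\<in>A. y a \<in> {0..1}) \<and> (\<Sum>a\<in>A. y a) = B" for y
      unfolding revenue_eq using that supply_slackness supply_total
      by (intro threshold_allocation_maximizes) auto
    show "z (Supply a) \<in> {0..1}" if "a \<in> A" for a
      using supply_in_01[OF that] .
  qed (simp_all add: prices_def supply_total)
qed

end

context sleo_market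
begin

theorem SLEO_exists: "\<exists>x y p. SLEO V A R s B I x y p"
proof -
  obtain z where "z \<in> states" "update z = z"
    using update_has_fixpoint by blast
  then interpret sleo_fixpoint V A R s B I z
    by unfold_locales
  show ?thesis
    using SLEO_at_fixpoint by blast
qed

end

theorem mainTheorem6:
  fixes V :: "'v set" and A :: "'a set" and R :: "'v \<Rightarrow> ('a \<times> 'a) set"
    and s B :: real and I :: "real measure"
  assumes "election V A R"
    and "0 < B" and "B \<le> real (card A)"
    and "0 < s"
    and "real_distribution I"
    and "measure I {0..1} = 1"
    and "\<forall>t. isCont (cdf I) t"
  shows "\<exists>x y p. SLEO V A R s B I x y p"
proof -
  interpret sleo_market V A R s B I
    using assms(1-3,5-7) by (rule sleo_market.intro)
  show ?thesis
    by (rule SLEO_exists)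
qed

end
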